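(* Let $k \in \mathbb{N}$ with $k \geq 2$. Then $$q(k) < \begin{cases} \frac{k}{3} & \text{if } k \bmod 3 = 0,\\ \left\lceil\frac{k}{2}\right\rceil & \text{otherwise,}\end{cases}$$ i.e. no index $q$ at least this value is admissible.
   Context: For a graph $G$ with an edge-colouring $f\colon E(G)\to\{1,\dots,k\}$ and $1\le j\le k$: $e_j[v]$ is the number of edges coloured $j$ in the subgraph induced by the closed neighbourhood $N[v]$ of $v$, and $\deg_j(v)$ is the number of edges coloured $j$ incident to $v$. Given a strictly increasing sequence of positive integers $(a_1,\dots,a_k)$, a $d$-regular graph $G$ with $d=\sum_j a_j$ is an $(a_1,\dots,a_k)$-flip graph if there is an edge-colouring with colours $\{1,\dots,k\}$ such that $\deg_j(v)=a_j$ for all vertices $v$ and all $j$, and $e_k[v]<e_{k-1}[v]<\dots<e_1[v]$ for every vertex $v$; the sequence is then a $k$-flip sequence. Call an index $q\in\{1,\dots,k-1\}$ admissible if there exists $h\in\mathbb{N}$ such that for every $N\in\mathbb{N}$ there is a $k$-flip sequence $(a_1,\dots,a_k)$ with $a_q=h$ and $a_k>N$; $q(k)$ denotes the largest admissible index. *)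

theory Defs
  imports Main
begin

text \<open>Finite simple graphs on vertex set V (vertices represented by natural numbers,
  which is no loss of generality for finite graphs); edges are 2-element subsets of V.\<close>

definition simple_graph :: "nat set \<Rightarrow> nat set set \<Rightarrow> bool" where
  "simple_graph V E \<longleftrightarrow> finite V \<and> (\<forall>e\<in>E. e \<subseteq> V \<and> card e = 2)"

definition degree :: "nat set set \<Rightarrow> nat \<Rightarrow> nat" where
  "degree E v = card {e\<in>E. v \<in> e}"

definition closed_nbhd :: "nat set set \<Rightarrow> nat \<Rightarrow> nat set" where
  "closed_nbhd E v = insert v {u. {u, v} \<in> E}"

definition col_deg :: "nat set set \<Rightarrow> (nat set \<Rightarrow> nat) \<Rightarrow> nat \<Rightarrow> nat \<Rightarrow> nat" where
  "col_deg E f j v = card {e\<in>E. v \<in> e \<and> f e = j}"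

definition col_edges_nbhd :: "nat set set \<Rightarrow> (nat set \<Rightarrow> nat) \<Rightarrow> nat \<Rightarrow> nat \<Rightarrow> nat" where
  "col_edges_nbhd E f j v = card {e\<in>E. e \<subseteq> closed_nbhd E v \<and> f e = j}"

text \<open>Sequences (a_1,...,a_k) are functions nat => nat; only indices 1..k matter.\<close>
definition strictly_incr_pos :: "nat \<Rightarrow> (nat \<Rightarrow> nat) \<Rightarrow> bool" where
  "strictly_incr_pos k a \<longleftrightarrow> 0 < a 1 \<and> (\<forall>j\<in>{1..<k}. a j < a (Suc j))"

definition flip_graph :: "nat \<Rightarrow> (nat \<Rightarrow> nat) \<Rightarrow> nat set \<Rightarrow> nat set set \<Rightarrow> bool" where
  "flip_graph k a V E \<longleftrightarrow>
     simple_graph V E \<and> V \<noteq> {} \<and>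
     (\<forall>v\<in>V. degree E v = (\<Sum>j=1..k. a j)) \<and>
     (\<exists>f. (\<forall>e\<in>E. f e \<in> {1..k}) \<and>
          (\<forall>v\<in>V. \<forall>j\<in>{1..k}. col_deg E f j v = a j) \<and>
          (\<forall>v\<in>V. \<forall>j\<in>{1..<k}. col_edges_nbhd E f (Suc j) v < col_edges_nbhd E f j v))"

definition flip_sequence :: "nat \<Rightarrow> (nat \<Rightarrow> nat) \<Rightarrow> bool" where
  "flip_sequence k a \<longleftrightarrow> strictly_incr_pos k a \<and> (\<exists>V E. flip_graph k a V E)"

definition admissible :: "nat \<Rightarrow> nat \<Rightarrow> bool" where
  "admissible k q \<longleftrightarrow> q \<in> {1..<k} \<and>
     (\<exists>h::nat. \<forall>N::nat. \<exists>a. flip_sequence k a \<and> a q = h \<and> a k > N)"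

end

theory Submission imports Defs begin

text \<open>Assume \<open>k \<le> 3q\<close> and fix a flip colouring; call colours \<open>\<le> q\<close> low and the others high.
  At each vertex \<open>v\<close>, \<open>e\<^sub>j[v]\<close> is \<open>a\<^sub>j\<close> plus the number of \<open>j\<close>-coloured edges between neighbours
  of \<open>v\<close>. As \<open>e\<^sub>j[v]\<close> decreases in \<open>j\<close> and there are at most \<open>2q\<close> high colours against \<open>q\<close> low
  ones, the high \<open>e\<^sub>j[v]\<close> sum to at most twice the low ones. Summed over \<open>v\<close>, the edges between
  neighbours become edges of triangles, counted once per triangle. A triangle has three edges,
  and twice its number of low edges exceeds its number of high edges only if two of its edges are
  low; such a triangle is fixed by a vertex and two low neighbours of it, so there are at most
  \<open>|V| s\<^sup>2\<close> of them, where \<open>s = a\<^sub>1 + \<dots> + a\<^sub>q\<close>. This gives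
  \<open>a\<^sub>k \<le> 2s + 6s\<^sup>2 \<le> 2qa\<^sub>q + 6(qa\<^sub>q)\<^sup>2\<close>, so \<open>a\<^sub>k\<close> cannot be unbounded while \<open>a\<^sub>q\<close> is fixed.\<close>

lemma card_filter_eq_sum_card_fibres:
  assumes "finite A" "finite K" "g ` A \<subseteq> K"
  shows "card {x\<in>A. C (g x)} = (\<Sum>j\<in>{j\<in>K. C j}. card {x\<in>A. g x = j})"
proof -
  have "card {x\<in>A. C (g x)} = (\<Sum>j\<in>{j\<in>K. C j}. \<Sum>x\<in>{x\<in>{x\<in>A. C (g x)}. g x = j}. 1::nat)"
    by (subst sum.group) (use assms in auto)
  also have "\<dots> = (\<Sum>j\<in>{j\<in>K. C j}. card {x\<in>A. g x = j})"
    by (rule sum.cong) (auto intro!: arg_cong[where f = card])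
  finally show ?thesis .
qed

lemma Suc_mono_on_interval:
  fixes g :: "nat \<Rightarrow> 'a::preorder"
  assumes "\<forall>l\<in>{m..<n}. g l \<le> g (Suc l)" "m \<le> i" "i \<le> j" "j \<le> n"
  shows "g i \<le> g j"
  using assms(3,4)
proof (induction j rule: dec_induct)
  case base
  show ?case by simp
next
  case (step l)
  then have "g l \<le> g (Suc l)"
    using assms(1,2) by simp
  moreover have "g i \<le> g l"
    using step by simp
  ultimately show ?case
    by (rule order_trans[rotated])
qed

lemma Suc_antimono_on_interval:
  fixes g :: "nat \<Rightarrow> 'a::preorder"
  assumes "\<forall>l\<in>{m..<n}. g (Suc l) \<le> g l" "m \<le> i" "i \<le> j" "j \<le> n"
  shows "g j \<le> g i"
  using assms(3,4)
proof (induction j rule: dec_induct)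
  case base
  show ?case by simp
next
  case (step l)
  then have "g (Suc l) \<le> g l"
    using assms(1,2) by simp
  moreover have "g l \<le> g i"
    using step by simp
  ultimately show ?case
    by (rule order_trans)
qed

lemma antimono_upper_sum_le:
  fixes g :: "nat \<Rightarrow> nat"
  assumes antimono: "\<forall>j\<in>{1..<k}. g (Suc j) \<le> g j" and "q < k"
  shows "q * (\<Sum>j=Suc q..k. g j) \<le> (k - q) * (\<Sum>j=1..q. g j)"
proof -
  have "(\<Sum>j=Suc q..k. g j) \<le> (\<Sum>j=Suc q..k. g (Suc q))"
    by (rule sum_mono) (use Suc_antimono_on_interval[OF antimono] in auto)
  then have upper: "(\<Sum>j=Suc q..k. g j) \<le> (k - q) * g (Suc q)"
    by simp
  have "(\<Sum>j=1..q. g (Suc q)) \<le> (\<Sum>j=1..q. g j)"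
    by (rule sum_mono) (use Suc_antimono_on_interval[OF antimono] \<open>q < k\<close> in auto)
  then have lower: "q * g (Suc q) \<le> (\<Sum>j=1..q. g j)"
    by simp
  have "q * (\<Sum>j=Suc q..k. g j) \<le> (k - q) * (q * g (Suc q))"
    using mult_le_mono2[OF upper, of q] by (simp add: ac_simps)
  also have "\<dots> \<le> (k - q) * (\<Sum>j=1..q. g j)"
    using lower by simp
  finally show ?thesis .
qed

lemma simple_graph_finite_edges:
  "simple_graph V E \<Longrightarrow> finite E"
  unfolding simple_graph_def by (rule finite_subset[of _ "Pow V"]) auto

lemma simple_graph_edgeE:
  assumes "simple_graph V E" "e \<in> E"
  obtains x y where "e = {x, y}" "x \<noteq> y" "x \<in> V" "y \<in> V"
  using assms unfolding simple_graph_def by (metis card_2_iff insert_subset)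

lemma simple_graph_edge_subset_closed_nbhd:
  assumes "simple_graph V E" "e \<in> E" "v \<in> e"
  shows "e \<subseteq> closed_nbhd E v"
proof
  fix u
  assume "u \<in> e"
  obtain x y where "e = {x, y}"
    using simple_graph_edgeE[OF assms(1,2)] by metis
  with \<open>u \<in> e\<close> assms(3) have "u = v \<or> {u, v} = e"
    by auto
  with assms(2) show "u \<in> closed_nbhd E v"
    unfolding closed_nbhd_def by auto
qed

definition link_edges :: "nat set set \<Rightarrow> (nat set \<Rightarrow> nat) \<Rightarrow> (nat \<Rightarrow> bool) \<Rightarrow> nat \<Rightarrow> nat set set" where
  "link_edges E f C v = {e\<in>E. v \<notin> e \<and> e \<subseteq> closed_nbhd E v \<and> C (f e)}"

lemma card_edges_closed_nbhd:
  assumes "simple_graph V E"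
  shows "card {e\<in>E. e \<subseteq> closed_nbhd E v \<and> C (f e)}
           = card {e\<in>E. v \<in> e \<and> C (f e)} + card (link_edges E f C v)"
proof -
  have "{e\<in>E. e \<subseteq> closed_nbhd E v \<and> C (f e)} = {e\<in>E. v \<in> e \<and> C (f e)} \<union> link_edges E f C v"
    using simple_graph_edge_subset_closed_nbhd[OF assms] unfolding link_edges_def by auto
  moreover have "finite E"
    using assms by (rule simple_graph_finite_edges)
  ultimately show ?thesis
    by (simp add: card_Un_disjoint link_edges_def disjoint_iff)
qed

definition triangles :: "nat set \<Rightarrow> nat set set \<Rightarrow> nat set set" where
  "triangles V E = {t. t \<subseteq> V \<and> card t = 3 \<and> (\<forall>u\<in>t. \<forall>w\<in>t. u \<noteq> w \<longrightarrow> {u, w} \<in> E)}"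

text \<open>Each edge of a triangle is represented by the opposite vertex.\<close>

definition triangle_colour_count :: "(nat set \<Rightarrow> nat) \<Rightarrow> (nat \<Rightarrow> bool) \<Rightarrow> nat set \<Rightarrow> nat" where
  "triangle_colour_count f C t = card {v\<in>t. C (f (t - {v}))}"

lemma finite_triangles:
  "simple_graph V E \<Longrightarrow> finite (triangles V E)"
  unfolding simple_graph_def triangles_def by (rule finite_subset[of _ "Pow V"]) auto

lemma insert_link_edge_in_triangles:
  assumes "simple_graph V E" "v \<in> V" "e \<in> link_edges E f C v"
  shows "insert v e \<in> triangles V E"
proof -
  have e: "e \<in> E" "v \<notin> e" "e \<subseteq> closed_nbhd E v"
    using assms(3) unfolding link_edges_def by auto
  obtain x y where "e = {x, y}" "x \<noteq> y" "x \<in> V" "y \<in> V"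
    using simple_graph_edgeE[OF assms(1) e(1)] .
  with e assms(2) show ?thesis
    unfolding triangles_def closed_nbhd_def by (auto simp: insert_commute)
qed

lemma triangle_remove_in_link_edges:
  assumes "t \<in> triangles V E" "v \<in> t" "C (f (t - {v}))"
  shows "t - {v} \<in> link_edges E f C v"
proof -
  have t: "card t = 3" "\<forall>u\<in>t. \<forall>w\<in>t. u \<noteq> w \<longrightarrow> {u, w} \<in> E"
    using assms(1) unfolding triangles_def by auto
  then obtain b c where bc: "t = {v, b, c}" "b \<noteq> v" "c \<noteq> v" "b \<noteq> c"
    using assms(2) by (auto simp: card_3_iff)
  then have "t - {v} = {b, c}"
    by auto
  moreover have "{b, c} \<in> E" "{b, v} \<in> E" "{c, v} \<in> E"
    using t(2) bc by auto
  ultimately show ?thesis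
    using assms(3) bc unfolding link_edges_def closed_nbhd_def by auto
qed

text \<open>Both sides count the pairs of a triangle and a vertex of it whose opposite edge has a
  colour in \<open>C\<close>.\<close>

lemma sum_card_link_edges:
  assumes "simple_graph V E"
  shows "(\<Sum>v\<in>V. card (link_edges E f C v)) = (\<Sum>t\<in>triangles V E. triangle_colour_count f C t)"
proof -
  let ?L = "SIGMA v:V. link_edges E f C v"
  let ?T = "SIGMA t:triangles V E. {v\<in>t. C (f (t - {v}))}"
  have fin: "finite V" "finite E" "finite (triangles V E)"
    using assms simple_graph_finite_edges finite_triangles by (auto simp: simple_graph_def)
  have "bij_betw (\<lambda>(v, e). (insert v e, v)) ?L ?T"
  proof (rule bij_betw_byWitness[where f' = "\<lambda>(t, v). (v, t - {v})"])
    show "\<forall>p\<in>?L. (\<lambda>(t, v). (v, t - {v})) ((\<lambda>(v, e). (insert v e, v)) p) = p"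
      by (auto simp: link_edges_def)
    show "\<forall>p\<in>?T. (\<lambda>(v, e). (insert v e, v)) ((\<lambda>(t, v). (v, t - {v})) p) = p"
      by auto
    show "(\<lambda>(v, e). (insert v e, v)) ` ?L \<subseteq> ?T"
      using insert_link_edge_in_triangles[OF assms] by (auto simp: link_edges_def)
    show "(\<lambda>(t, v). (v, t - {v})) ` ?T \<subseteq> ?L"
      using triangle_remove_in_link_edges by (auto simp: triangles_def)
  qed
  then have "card ?L = card ?T"
    by (rule bij_betw_same_card)
  moreover have "\<forall>t\<in>triangles V E. finite t"
    using fin(1) by (auto simp: triangles_def intro: finite_subset)
  ultimately show ?thesis
    using fin by (simp add: link_edges_def triangle_colour_count_def)
qed

lemma triangle_colour_count_add_compl:
  assumes "t \<in> triangles V E"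
  shows "triangle_colour_count f C t + triangle_colour_count f (\<lambda>c. \<not> C c) t = 3"
proof -
  have "card t = 3"
    using assms unfolding triangles_def by simp
  then have "finite t"
    using card.infinite by fastforce
  have "card {v\<in>t. C (f (t - {v}))} + card {v\<in>t. \<not> C (f (t - {v}))} = card t"
    by (subst card_Un_disjoint[symmetric]) (use \<open>finite t\<close> in \<open>auto intro: arg_cong[where f = card]\<close>)
  with \<open>card t = 3\<close> show ?thesis
    unfolding triangle_colour_count_def by simp
qed

lemma card_colour_nbrs_le:
  assumes "simple_graph V E"
  shows "card {u. {u, b} \<in> E \<and> C (f {u, b})} \<le> card {e\<in>E. b \<in> e \<and> C (f e)}"
proof (rule card_inj_on_le)
  show "inj_on (\<lambda>u. {u, b}) {u. {u, b} \<in> E \<and> C (f {u, b})}"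
    by (rule inj_onI) (metis doubleton_eq_iff)
  show "(\<lambda>u. {u, b}) ` {u. {u, b} \<in> E \<and> C (f {u, b})} \<subseteq> {e\<in>E. b \<in> e \<and> C (f e)}"
    by auto
  show "finite {e\<in>E. b \<in> e \<and> C (f e)}"
    using simple_graph_finite_edges[OF assms] by simp
qed

text \<open>A triangle with two edges coloured in \<open>C\<close> is determined by their common vertex \<open>b\<close> and
  their other endpoints, two \<open>C\<close>-neighbours of \<open>b\<close>.\<close>

lemma card_triangles_two_coloured_le:
  assumes graph: "simple_graph V E"
    and deg: "\<forall>v\<in>V. card {e\<in>E. v \<in> e \<and> C (f e)} \<le> s"
  shows "card {t\<in>triangles V E. 2 \<le> triangle_colour_count f C t} \<le> card V * s\<^sup>2"
proof -
  define N where "N b = {u. {u, b} \<in> E \<and> C (f {u, b})}" for b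
  let ?W = "SIGMA b:V. N b \<times> N b"
  have "finite V"
    using graph unfolding simple_graph_def by simp
  have N_sub: "N b \<subseteq> V" for b
    using graph unfolding N_def simple_graph_def by auto
  have N_fin: "finite (N b)" for b
    using N_sub \<open>finite V\<close> by (rule finite_subset)
  have covered: "{t\<in>triangles V E. 2 \<le> triangle_colour_count f C t} \<subseteq> (\<lambda>(b, u, w). {u, w, b}) ` ?W"
  proof
    fix t
    assume t: "t \<in> {t\<in>triangles V E. 2 \<le> triangle_colour_count f C t}"
    then have t3: "card t = 3" "t \<subseteq> V" and edges: "\<forall>u\<in>t. \<forall>w\<in>t. u \<noteq> w \<longrightarrow> {u, w} \<in> E"
      unfolding triangles_def by auto
    obtain u w where uw: "u \<in> t" "w \<in> t" "u \<noteq> w" and C: "C (f (t - {u}))" "C (f (t - {w}))"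
      using t unfolding triangle_colour_count_def by (auto simp: numeral_2_eq_2 card_le_Suc_iff)
    with t3 obtain b where b: "t = {u, w, b}" "b \<in> V" "b \<noteq> u" "b \<noteq> w"
      by (auto simp: card_3_iff)
    then have "t - {w} = {u, b}" "t - {u} = {w, b}"
      using uw by auto
    with edges C b uw have "u \<in> N b" "w \<in> N b"
      unfolding N_def by (auto simp: insert_commute)
    with b show "t \<in> (\<lambda>(b, u, w). {u, w, b}) ` ?W"
      by (auto intro!: image_eqI[where x = "(b, u, w)"])
  qed
  have "finite ?W"
    using \<open>finite V\<close> N_fin by simp
  have "card {t\<in>triangles V E. 2 \<le> triangle_colour_count f C t} \<le> card ((\<lambda>(b, u, w). {u, w, b}) ` ?W)"
    using covered \<open>finite ?W\<close> by (intro card_mono) auto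
  also have "\<dots> \<le> card ?W"
    using \<open>finite ?W\<close> by (rule card_image_le)
  also have "\<dots> = (\<Sum>b\<in>V. card (N b) * card (N b))"
    using \<open>finite V\<close> N_fin by (simp add: card_cartesian_product)
  also have "\<dots> \<le> (\<Sum>b\<in>V. s * s)"
  proof (intro sum_mono mult_le_mono)
    fix b
    assume "b \<in> V"
    then show "card (N b) \<le> s"
      using card_colour_nbrs_le[OF graph, of b C f] deg unfolding N_def by fastforce
    then show "card (N b) \<le> s" .
  qed
  finally show ?thesis
    by (simp add: power2_eq_square)
qed

lemma sum_triangle_colour_count_le:
  assumes graph: "simple_graph V E"
    and deg: "\<forall>v\<in>V. card {e\<in>E. v \<in> e \<and> C (f e)} \<le> s"
  shows "2 * (\<Sum>t\<in>triangles V E. triangle_colour_count f C t)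
           \<le> (\<Sum>t\<in>triangles V E. triangle_colour_count f (\<lambda>c. \<not> C c) t) + 6 * (card V * s\<^sup>2)"
proof -
  let ?T = "triangles V E"
  let ?c = "triangle_colour_count f C" and ?c' = "triangle_colour_count f (\<lambda>c. \<not> C c)"
  have "(\<Sum>t\<in>?T. 2 * ?c t) \<le> (\<Sum>t\<in>?T. ?c' t + (if 2 \<le> ?c t then 6 else 0))"
  proof (rule sum_mono)
    fix t
    assume "t \<in> ?T"
    then have "?c t + ?c' t = 3"
      by (rule triangle_colour_count_add_compl)
    then show "2 * ?c t \<le> ?c' t + (if 2 \<le> ?c t then 6 else 0)"
      by auto
  qed
  also have "\<dots> = (\<Sum>t\<in>?T. ?c' t) + 6 * card {t\<in>?T. 2 \<le> ?c t}"
    using finite_triangles[OF graph] by (simp add: sum.distrib sum.If_cases Int_def conj_commute)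
  also have "\<dots> \<le> (\<Sum>t\<in>?T. ?c' t) + 6 * (card V * s\<^sup>2)"
    using card_triangles_two_coloured_le[OF graph deg] by simp
  finally show ?thesis
    by (simp add: sum_distrib_left)
qed

lemma card_incident_edges_colour_class:
  assumes "finite E" "\<forall>e\<in>E. f e \<in> {1..k}" "\<forall>j\<in>{1..k}. col_deg E f j v = a j"
  shows "card {e\<in>E. v \<in> e \<and> C (f e)} = (\<Sum>j\<in>{j\<in>{1..k}. C j}. a j)"
proof -
  have "f ` {e\<in>E. v \<in> e} \<subseteq> {1..k}"
    using assms(2) by auto
  from card_filter_eq_sum_card_fibres[OF _ _ this, of C] assms(1)
  have "card {e\<in>E. v \<in> e \<and> C (f e)} = (\<Sum>j\<in>{j\<in>{1..k}. C j}. col_deg E f j v)"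
    unfolding col_deg_def by simp
  also have "\<dots> = (\<Sum>j\<in>{j\<in>{1..k}. C j}. a j)"
    using assms(3) by (intro sum.cong) auto
  finally show ?thesis .
qed

lemma sum_col_edges_nbhd_eq_sum_add_link:
  assumes graph: "simple_graph V E" and colours: "\<forall>e\<in>E. f e \<in> {1..k}"
    and deg: "\<forall>j\<in>{1..k}. col_deg E f j v = a j"
  shows "(\<Sum>j\<in>{j\<in>{1..k}. C j}. col_edges_nbhd E f j v)
           = (\<Sum>j\<in>{j\<in>{1..k}. C j}. a j) + card (link_edges E f C v)"
proof -
  have "finite E"
    using graph by (rule simple_graph_finite_edges)
  have "f ` {e\<in>E. e \<subseteq> closed_nbhd E v} \<subseteq> {1..k}"
    using colours by auto
  from card_filter_eq_sum_card_fibres[OF _ _ this, of C] \<open>finite E\<close>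
  have "(\<Sum>j\<in>{j\<in>{1..k}. C j}. col_edges_nbhd E f j v) = card {e\<in>E. e \<subseteq> closed_nbhd E v \<and> C (f e)}"
    unfolding col_edges_nbhd_def by simp
  then show ?thesis
    using card_edges_closed_nbhd[OF graph] card_incident_edges_colour_class[OF \<open>finite E\<close> colours deg]
    by simp
qed

lemma flip_vertex_upper_le:
  assumes graph: "simple_graph V E" and colours: "\<forall>e\<in>E. f e \<in> {1..k}"
    and deg: "\<forall>j\<in>{1..k}. col_deg E f j v = a j"
    and chain: "\<forall>j\<in>{1..<k}. col_edges_nbhd E f (Suc j) v < col_edges_nbhd E f j v"
    and "q < k" "k \<le> 3 * q"
  shows "(\<Sum>j=Suc q..k. a j) + card (link_edges E f (\<lambda>c. \<not> c \<le> q) v)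
           \<le> 2 * ((\<Sum>j=1..q. a j) + card (link_edges E f (\<lambda>c. c \<le> q) v))"
proof -
  let ?e = "\<lambda>j. col_edges_nbhd E f j v"
  have J: "{j\<in>{1..k}. j \<le> q} = {1..q}" "{j\<in>{1..k}. \<not> j \<le> q} = {Suc q..k}"
    using \<open>q < k\<close> by auto
  note split = sum_col_edges_nbhd_eq_sum_add_link[OF graph colours deg]
  have low: "(\<Sum>j=1..q. ?e j) = (\<Sum>j=1..q. a j) + card (link_edges E f (\<lambda>c. c \<le> q) v)"
    using split[where C = "\<lambda>c. c \<le> q", unfolded J(1)] .
  have high: "(\<Sum>j=Suc q..k. ?e j) = (\<Sum>j=Suc q..k. a j) + card (link_edges E f (\<lambda>c. \<not> c \<le> q) v)"
    using split[where C = "\<lambda>c. \<not> c \<le> q", unfolded J(2)] .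
  have "q * (\<Sum>j=Suc q..k. ?e j) \<le> (k - q) * (\<Sum>j=1..q. ?e j)"
    using antimono_upper_sum_le[of k ?e q] chain \<open>q < k\<close> by (simp add: less_imp_le)
  also have "\<dots> \<le> (2 * q) * (\<Sum>j=1..q. ?e j)"
    using \<open>k \<le> 3 * q\<close> by (intro mult_right_mono) auto
  also have "\<dots> = q * (2 * (\<Sum>j=1..q. ?e j))"
    by simp
  finally have "(\<Sum>j=Suc q..k. ?e j) \<le> 2 * (\<Sum>j=1..q. ?e j)"
    using \<open>q < k\<close> \<open>k \<le> 3 * q\<close> by simp
  then show ?thesis
    using low high by simp
qed

lemma flip_graph_upper_sum_le:
  assumes "flip_graph k a V E" "q < k" "k \<le> 3 * q"
  shows "(\<Sum>j=Suc q..k. a j) \<le> 2 * (\<Sum>j=1..q. a j) + 6 * (\<Sum>j=1..q. a j)\<^sup>2"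
proof -
  obtain f where graph: "simple_graph V E" and "V \<noteq> {}" and colours: "\<forall>e\<in>E. f e \<in> {1..k}"
    and deg: "\<forall>v\<in>V. \<forall>j\<in>{1..k}. col_deg E f j v = a j"
    and chain: "\<forall>v\<in>V. \<forall>j\<in>{1..<k}. col_edges_nbhd E f (Suc j) v < col_edges_nbhd E f j v"
    using assms(1) unfolding flip_graph_def by blast
  define s where "s = (\<Sum>j=1..q. a j)"
  define n where "n = card V"
  let ?L = "\<lambda>v. card (link_edges E f (\<lambda>c. c \<le> q) v)"
  let ?H = "\<lambda>v. card (link_edges E f (\<lambda>c. \<not> c \<le> q) v)"
  have "n > 0"
    using graph \<open>V \<noteq> {}\<close> unfolding n_def simple_graph_def by (simp add: card_gt_0_iff)
  have J: "{j\<in>{1..k}. j \<le> q} = {1..q}"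
    using \<open>q < k\<close> by auto
  have low_deg: "\<forall>v\<in>V. card {e\<in>E. v \<in> e \<and> f e \<le> q} \<le> s"
  proof
    fix v
    assume "v \<in> V"
    with card_incident_edges_colour_class[OF simple_graph_finite_edges[OF graph] colours bspec[OF deg],
        where C = "\<lambda>c. c \<le> q", unfolded J]
    show "card {e\<in>E. v \<in> e \<and> f e \<le> q} \<le> s"
      unfolding s_def by simp
  qed
  have "(\<Sum>v\<in>V. (\<Sum>j=Suc q..k. a j) + ?H v) \<le> (\<Sum>v\<in>V. 2 * (s + ?L v))"
    unfolding s_def
    by (rule sum_mono, rule flip_vertex_upper_le[OF graph colours]) (use deg chain assms(2,3) in auto)
  then have "n * (\<Sum>j=Suc q..k. a j) + (\<Sum>v\<in>V. ?H v) \<le> 2 * (n * s) + 2 * (\<Sum>v\<in>V. ?L v)"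
    unfolding n_def by (simp add: sum.distrib sum_distrib_left)
  moreover have "2 * (\<Sum>v\<in>V. ?L v) \<le> (\<Sum>v\<in>V. ?H v) + 6 * (n * s\<^sup>2)"
    using sum_triangle_colour_count_le[OF graph low_deg] sum_card_link_edges[OF graph]
    unfolding n_def by simp
  ultimately have "n * (\<Sum>j=Suc q..k. a j) \<le> n * (2 * s + 6 * s\<^sup>2)"
    by (simp add: algebra_simps)
  with \<open>n > 0\<close> show ?thesis
    unfolding s_def by simp
qed

lemma strictly_incr_pos_sum_le:
  assumes "strictly_incr_pos k a" "q \<le> k"
  shows "(\<Sum>j=1..q. a j) \<le> q * a q"
proof -
  have "(\<Sum>j=1..q. a j) \<le> (\<Sum>j=1..q. a q)"
  proof (rule sum_mono)
    fix j
    assume "j \<in> {1..q}"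
    with assms show "a j \<le> a q"
      unfolding strictly_incr_pos_def by (intro Suc_mono_on_interval[of 1 k a]) (auto intro: less_imp_le)
  qed
  then show ?thesis
    by simp
qed

lemma admissible_three_mul_less:
  assumes "admissible k q"
  shows "3 * q < k"
proof (rule ccontr)
  assume "\<not> 3 * q < k"
  from assms obtain h where "q < k" and unbounded: "\<forall>N. \<exists>a. flip_sequence k a \<and> a q = h \<and> a k > N"
    unfolding admissible_def by auto
  then obtain a V E where "strictly_incr_pos k a" "flip_graph k a V E" "a q = h"
    and large: "a k > 2 * (q * h) + 6 * (q * h)\<^sup>2"
    unfolding flip_sequence_def by blast
  have "s \<le> q * h \<Longrightarrow> 2 * s + 6 * s\<^sup>2 \<le> 2 * (q * h) + 6 * (q * h)\<^sup>2" for s :: nat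
    by (intro add_mono mult_le_mono2 power_mono) auto
  moreover have "(\<Sum>j=1..q. a j) \<le> q * h"
    using strictly_incr_pos_sum_le[OF \<open>strictly_incr_pos k a\<close> less_imp_le[OF \<open>q < k\<close>]] \<open>a q = h\<close>
    by simp
  moreover have "a k \<le> (\<Sum>j=Suc q..k. a j)"
    using \<open>q < k\<close> by (intro member_le_sum) auto
  ultimately have "a k \<le> 2 * (q * h) + 6 * (q * h)\<^sup>2"
    using flip_graph_upper_sum_le[OF \<open>flip_graph k a V E\<close> \<open>q < k\<close>] \<open>\<not> 3 * q < k\<close>
    by (meson le_trans not_less)
  with large show False
    by simp
qed

text \<open>The argument gives \<open>3q < k\<close> for every \<open>k\<close>; the stated bound is weaker when \<open>3\<close> does not
  divide \<open>k\<close>, and the hypothesis \<open>k \<ge> 2\<close> is not needed.\<close>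

theorem theorem4p2:
  fixes k q :: nat
  assumes "k \<ge> 2"
    and "admissible k q"
  shows "q < (if k mod 3 = 0 then k div 3 else (k + 1) div 2)"
  using admissible_three_mul_less[OF assms(2)] by auto

end
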